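(* Let $(G,E)$ be a finitely generated and contracting self-similar groupoid action on a finite directed graph $E$, and let $q:E^{-\infty}\to\mathcal{J}_{G,E}$ be the quotient map. Then for $\mu,\nu\in E^{-\infty}$, $q(\mu)$ and $q(\nu)$ lie in the same connected component of $\mathcal{J}_{G,E}$ if and only if $\mu\sim_e\nu$. That is, the connected component space $\mathcal{C}(\mathcal{J}_{G,E})$ equals $E^{-\infty}/\sim_e$.
   Context: Directed graph $E=(E^0,E^1,r,s)$; finite paths $\mu_1\cdots\mu_n$ with $s(\mu_i)=r(\mu_{i+1})$; $E^*$ finite paths, $vE^*$ those with range $v$; $E^{-\infty}$ left-infinite paths $\cdots\mu_{-2}\mu_{-1}$ with product topology. A self-similar groupoid action $(G,E)$: $G$ is a groupoid with unit space $E^0$, domain $d$, codomain $c$, acting faithfully so that each $g$ is a length-preserving bijection $d(g)E^*\to c(g)E^*$ with restrictions $g|_\mu\in G$, $d(g|_\mu)=s(\mu)$, satisfying $g\cdot(\mu\nu)=(g\cdot\mu)(g|_\mu\cdot\nu)$. Finitely generated: $G$ is generated as a groupoid by a finite set. Contracting: there is a finite $F\subseteq G$ such that for every $g$ there is $n$ with $g|_\mu\in F$ for all $\mu\in d(g)E^k$, $k\ge n$. Asymptotic equivalence: $\mu\sim_{ae}\nu$ iff there are a finite $F\subseteq G$ and $(g_n)_{n<0}\subseteq F$ with $d(g_n)=r(\mu_n)$ and $g_n\cdot\mu_n\cdots\mu_{-1}=\nu_n\cdots\nu_{-1}$ for all $n<0$; the limit space is $\mathcal{J}_{G,E}=E^{-\infty}/\sim_{ae}$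 with the quotient topology. The relation $\sim_e$: $\mu\sim_e\nu$ iff there is a sequence $(g_n)_{n<0}\subseteq G$ (not required to lie in a finite set) with $d(g_n)=r(\mu_n)$ and $g_n\cdot\mu_n\cdots\mu_{-1}=\nu_n\cdots\nu_{-1}$ for all $n<0$. The connected component space $\mathcal{C}(X)$ of a space $X$ is its quotient by the relation of lying in the same connected component. *)

theory Defs
  imports "HOL-Analysis.Analysis"
begin

definition graph :: "'v set \<Rightarrow> 'e set \<Rightarrow> ('e \<Rightarrow> 'v) \<Rightarrow> ('e \<Rightarrow> 'v) \<Rightarrow> bool" where
  "graph V Ed rg sr \<longleftrightarrow> (\<forall>e\<in>Ed. rg e \<in> V \<and> sr e \<in> V)"

definition is_path :: "'e set \<Rightarrow> ('e \<Rightarrow> 'v) \<Rightarrow> ('e \<Rightarrow> 'v) \<Rightarrow> 'e list \<Rightarrow> bool" where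
  "is_path Ed rg sr p \<longleftrightarrow> set p \<subseteq> Ed \<and> (\<forall>i. Suc i < length p \<longrightarrow> sr (p ! i) = rg (p ! Suc i))"

text \<open>vE^*: finite paths with range v.  The path of length 0 at v is represented by the
  empty list (the vertex it sits at is the parameter v).\<close>

definition paths_at :: "'e set \<Rightarrow> ('e \<Rightarrow> 'v) \<Rightarrow> ('e \<Rightarrow> 'v) \<Rightarrow> 'v \<Rightarrow> 'e list set" where
  "paths_at Ed rg sr v = {p. is_path Ed rg sr p \<and> (p \<noteq> [] \<longrightarrow> rg (hd p) = v)}"

definition path_source :: "('e \<Rightarrow> 'v) \<Rightarrow> 'v \<Rightarrow> 'e list \<Rightarrow> 'v" where
  "path_source sr v p = (if p = [] then v else sr (last p))"

definition groupoid ::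
  "'v set \<Rightarrow> 'g set \<Rightarrow> ('g \<Rightarrow> 'v) \<Rightarrow> ('g \<Rightarrow> 'v) \<Rightarrow> ('g \<Rightarrow> 'g \<Rightarrow> 'g) \<Rightarrow> ('g \<Rightarrow> 'g) \<Rightarrow> ('v \<Rightarrow> 'g) \<Rightarrow> bool" where
  "groupoid V Gr dm cd mul ginv unit \<longleftrightarrow>
     (\<forall>g\<in>Gr. dm g \<in> V \<and> cd g \<in> V) \<and>
     (\<forall>v\<in>V. unit v \<in> Gr \<and> dm (unit v) = v \<and> cd (unit v) = v) \<and>
     inj_on unit V \<and>
     (\<forall>g\<in>Gr. \<forall>h\<in>Gr. dm g = cd h \<longrightarrow> mul g h \<in> Gr \<and> dm (mul g h) = dm h \<and> cd (mul g h) = cd g) \<and>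
     (\<forall>g\<in>Gr. \<forall>h\<in>Gr. \<forall>k\<in>Gr. dm g = cd h \<longrightarrow> dm h = cd k \<longrightarrow> mul (mul g h) k = mul g (mul h k)) \<and>
     (\<forall>g\<in>Gr. mul (unit (cd g)) g = g \<and> mul g (unit (dm g)) = g) \<and>
     (\<forall>g\<in>Gr. ginv g \<in> Gr \<and> dm (ginv g) = cd g \<and> cd (ginv g) = dm g \<and>
              mul (ginv g) g = unit (dm g) \<and> mul g (ginv g) = unit (cd g))"

inductive_set gen_groupoid ::
  "'v set \<Rightarrow> ('g \<Rightarrow> 'v) \<Rightarrow> ('g \<Rightarrow> 'v) \<Rightarrow> ('g \<Rightarrow> 'g \<Rightarrow> 'g) \<Rightarrow> ('g \<Rightarrow> 'g) \<Rightarrow> ('v \<Rightarrow> 'g) \<Rightarrow> 'g set \<Rightarrow> 'g set"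
  for V dm cd mul ginv unit S where
  gen_unit: "v \<in> V \<Longrightarrow> unit v \<in> gen_groupoid V dm cd mul ginv unit S"
| gen_base: "g \<in> S \<Longrightarrow> g \<in> gen_groupoid V dm cd mul ginv unit S"
| gen_inv: "g \<in> gen_groupoid V dm cd mul ginv unit S \<Longrightarrow> ginv g \<in> gen_groupoid V dm cd mul ginv unit S"
| gen_mul: "g \<in> gen_groupoid V dm cd mul ginv unit S \<Longrightarrow> h \<in> gen_groupoid V dm cd mul ginv unit S \<Longrightarrow>
            dm g = cd h \<Longrightarrow> mul g h \<in> gen_groupoid V dm cd mul ginv unit S"

text \<open>act g is the action of g on d(g)E^*, res g p is the restriction g|_p.\<close>

definition self_similar_action ::
  "'v set \<Rightarrow> 'e set \<Rightarrow> ('e \<Rightarrow> 'v) \<Rightarrow> ('e \<Rightarrow> 'v) \<Rightarrow>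
   'g set \<Rightarrow> ('g \<Rightarrow> 'v) \<Rightarrow> ('g \<Rightarrow> 'v) \<Rightarrow> ('g \<Rightarrow> 'g \<Rightarrow> 'g) \<Rightarrow> ('g \<Rightarrow> 'g) \<Rightarrow> ('v \<Rightarrow> 'g) \<Rightarrow>
   ('g \<Rightarrow> 'e list \<Rightarrow> 'e list) \<Rightarrow> ('g \<Rightarrow> 'e list \<Rightarrow> 'g) \<Rightarrow> bool" where
  "self_similar_action V Ed rg sr Gr dm cd mul ginv unit act res \<longleftrightarrow>
     graph V Ed rg sr \<and>
     groupoid V Gr dm cd mul ginv unit \<and>
     \<comment> \<open>each g is a length-preserving bijection d(g)E^* \<rightarrow> c(g)E^*\<close>
     (\<forall>g\<in>Gr. bij_betw (act g) (paths_at Ed rg sr (dm g)) (paths_at Ed rg sr (cd g)) \<and>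
              (\<forall>p\<in>paths_at Ed rg sr (dm g). length (act g p) = length p)) \<and>
     \<comment> \<open>groupoid action\<close>
     (\<forall>v\<in>V. \<forall>p\<in>paths_at Ed rg sr v. act (unit v) p = p) \<and>
     (\<forall>g\<in>Gr. \<forall>h\<in>Gr. dm g = cd h \<longrightarrow>
        (\<forall>p\<in>paths_at Ed rg sr (dm h). act (mul g h) p = act g (act h p))) \<and>
     \<comment> \<open>faithfulness\<close>
     (\<forall>g\<in>Gr. \<forall>h\<in>Gr. dm g = dm h \<longrightarrow> cd g = cd h \<longrightarrow>
        (\<forall>p\<in>paths_at Ed rg sr (dm g). act g p = act h p) \<longrightarrow> g = h) \<and>
     \<comment> \<open>restrictions and self-similarity\<close>
     (\<forall>g\<in>Gr. \<forall>p\<in>paths_at Ed rg sr (dm g).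
        res g p \<in> Gr \<and> dm (res g p) = path_source sr (dm g) p \<and>
        (\<forall>q. p @ q \<in> paths_at Ed rg sr (dm g) \<longrightarrow> act g (p @ q) = act g p @ act (res g p) q))"

definition finitely_generated ::
  "'v set \<Rightarrow> 'g set \<Rightarrow> ('g \<Rightarrow> 'v) \<Rightarrow> ('g \<Rightarrow> 'v) \<Rightarrow> ('g \<Rightarrow> 'g \<Rightarrow> 'g) \<Rightarrow> ('g \<Rightarrow> 'g) \<Rightarrow> ('v \<Rightarrow> 'g) \<Rightarrow> bool" where
  "finitely_generated V Gr dm cd mul ginv unit \<longleftrightarrow>
     (\<exists>S. finite S \<and> S \<subseteq> Gr \<and> Gr = gen_groupoid V dm cd mul ginv unit S)"

definition contracting ::
  "'e set \<Rightarrow> ('e \<Rightarrow> 'v) \<Rightarrow> ('e \<Rightarrow> 'v) \<Rightarrow> 'g set \<Rightarrow> ('g \<Rightarrow> 'v) \<Rightarrow> ('g \<Rightarrow> 'e list \<Rightarrow> 'g) \<Rightarrow> bool" where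
  "contracting Ed rg sr Gr dm res \<longleftrightarrow>
     (\<exists>F. finite F \<and> F \<subseteq> Gr \<and>
        (\<forall>g\<in>Gr. \<exists>n. \<forall>p\<in>paths_at Ed rg sr (dm g). length p \<ge> n \<longrightarrow> res g p \<in> F))"

text \<open>A left-infinite path ... mu_(-2) mu_(-1) is encoded as x :: nat \<Rightarrow> 'e with
  x k = mu_(-(k+1)).  The path condition s(mu_(n-1)) = r(mu_n) becomes sr (x (Suc k)) = rg (x k).\<close>

definition left_inf_paths :: "'e set \<Rightarrow> ('e \<Rightarrow> 'v) \<Rightarrow> ('e \<Rightarrow> 'v) \<Rightarrow> (nat \<Rightarrow> 'e) set" where
  "left_inf_paths Ed rg sr = {x. (\<forall>k. x k \<in> Ed) \<and> (\<forall>k. sr (x (Suc k)) = rg (x k))}"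

definition left_inf_topology :: "'e set \<Rightarrow> ('e \<Rightarrow> 'v) \<Rightarrow> ('e \<Rightarrow> 'v) \<Rightarrow> (nat \<Rightarrow> 'e) topology" where
  "left_inf_topology Ed rg sr =
     subtopology (product_topology (\<lambda>_. discrete_topology Ed) UNIV) (left_inf_paths Ed rg sr)"

text \<open>The finite tail mu_n ... mu_(-1) with n = -(k+1), i.e. [x k, x (k-1), ..., x 0].\<close>
definition tail :: "(nat \<Rightarrow> 'e) \<Rightarrow> nat \<Rightarrow> 'e list" where
  "tail x k = rev (map x [0..<Suc k])"

definition ae_equiv ::
  "('e \<Rightarrow> 'v) \<Rightarrow> 'g set \<Rightarrow> ('g \<Rightarrow> 'v) \<Rightarrow> ('g \<Rightarrow> 'e list \<Rightarrow> 'e list) \<Rightarrow> (nat \<Rightarrow> 'e) \<Rightarrow> (nat \<Rightarrow> 'e) \<Rightarrow> bool" where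
  "ae_equiv rg Gr dm act x y \<longleftrightarrow>
     (\<exists>F g. finite F \<and> F \<subseteq> Gr \<and>
        (\<forall>k. g k \<in> F \<and> dm (g k) = rg (x k) \<and> act (g k) (tail x k) = tail y k))"

definition e_equiv ::
  "('e \<Rightarrow> 'v) \<Rightarrow> 'g set \<Rightarrow> ('g \<Rightarrow> 'v) \<Rightarrow> ('g \<Rightarrow> 'e list \<Rightarrow> 'e list) \<Rightarrow> (nat \<Rightarrow> 'e) \<Rightarrow> (nat \<Rightarrow> 'e) \<Rightarrow> bool" where
  "e_equiv rg Gr dm act x y \<longleftrightarrow>
     (\<exists>g. \<forall>k. g k \<in> Gr \<and> dm (g k) = rg (x k) \<and> act (g k) (tail x k) = tail y k)"

end

theory Submission
  imports Defs
begin

text \<open>Sets of left-infinite paths defined by a condition on a single finite tail are clopen.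

  If \<open>q \<mu>\<close> and \<open>q \<nu>\<close> lie in one component then, for every \<open>k\<close>, the paths whose \<open>k\<close>-th tail lies
  in the orbit of the \<open>k\<close>-th tail of \<open>\<mu>\<close> form a clopen set saturated for asymptotic
  equivalence. Its image is clopen in the limit space, so it contains the component of \<open>q \<mu>\<close>,
  and \<open>\<mu> \<sim>\<^sub>e \<nu>\<close> follows.

  Conversely, the \<open>\<sim>\<^sub>e\<close>-class \<open>A\<close> of \<open>\<mu>\<close> is closed, hence compact, so a separation of
  \<open>q ` A\<close> would already separate its two preimages at some finite tail level \<open>n\<close>. This is
  impossible: any two points of \<open>A\<close> are joined by a chain in \<open>A\<close> whose steps either keep
  the \<open>n\<close>-th tail or are asymptotic equivalences. The tails of the two points at a deep level
  are joined by generator moves inside one orbit, and each such move is realised by an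
  asymptotically equivalent pair of paths in \<open>A\<close>. Past depth \<open>N\<close> the restrictions of a
  generator lie in the finite set \<open>F\<close> given by contraction. Because the graph is finite, the
  depth at which such realisations exist stabilises, and Koenig's lemma turns realisations
  of every finite depth into infinite ones.\<close>


section \<open>Finite paths and tails\<close>

lemma is_path_Nil [simp]: "is_path Ed rg sr []"
  by (simp add: is_path_def)

lemma is_path_Cons:
  "is_path Ed rg sr (e # p) \<longleftrightarrow> e \<in> Ed \<and> is_path Ed rg sr p \<and> (p \<noteq> [] \<longrightarrow> sr e = rg (hd p))"
  by (cases p) (auto simp: is_path_def nth_Cons hd_conv_nth split: nat.splits)

lemma is_path_append:
  "is_path Ed rg sr (p @ q) \<longleftrightarrow>
     is_path Ed rg sr p \<and> is_path Ed rg sr q \<and> (p \<noteq> [] \<and> q \<noteq> [] \<longrightarrow> sr (last p) = rg (hd q))"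
  by (induction p) (auto simp: is_path_Cons)

lemma paths_at_appendD:
  assumes "p @ q \<in> paths_at Ed rg sr v"
  shows "p \<in> paths_at Ed rg sr v" and "q \<in> paths_at Ed rg sr (path_source sr v p)"
  using assms is_path_append[of Ed rg sr p q]
  by (cases p; cases q; auto simp: paths_at_def path_source_def)+

lemma tail_0: "tail x 0 = [x 0]"
  by (simp add: tail_def)

lemma tail_Suc: "tail x (Suc k) = x (Suc k) # tail x k"
  by (simp add: tail_def)

lemma length_tail [simp]: "length (tail x k) = Suc k"
  by (simp add: tail_def)

lemma tail_ne_Nil [simp]: "tail x k \<noteq> []"
  by (simp add: tail_def)

lemma hd_tail [simp]: "hd (tail x k) = x k"
  by (cases k) (simp_all add: tail_0 tail_Suc)

lemma tail_comp: "tail (\<lambda>j. h (f j)) k = map h (tail f k)"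
  by (simp add: tail_def rev_map)

lemma drop_tail: "k \<le> m \<Longrightarrow> drop (m - k) (tail x m) = tail x k"
proof (induction m)
  case (Suc m)
  then show ?case
    by (cases "k = Suc m") (simp_all add: tail_Suc Suc_diff_le)
qed simp

lemma tail_eq_tail_iff: "tail x k = tail y k \<longleftrightarrow> (\<forall>i\<le>k. x i = y i)"
  by (auto simp: tail_def map_eq_conv atLeast0LessThan lessThan_Suc_atMost simp del: upt_Suc)

lemma tail_prepend:
  assumes "length r = Suc n"
  shows "tail (\<lambda>k. if k \<le> n then r ! (n - k) else g (k - Suc n)) n = r"
    and "tail (\<lambda>k. if k \<le> n then r ! (n - k) else g (k - Suc n)) (Suc n + j) = tail g j @ r"
proof -
  show r: "tail (\<lambda>k. if k \<le> n then r ! (n - k) else g (k - Suc n)) n = r"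
    using assms by (intro nth_equalityI) (auto simp: tail_def rev_nth simp del: upt_Suc)
  show "tail (\<lambda>k. if k \<le> n then r ! (n - k) else g (k - Suc n)) (Suc n + j) = tail g j @ r"
    by (induction j) (simp_all add: r tail_Suc tail_0)
qed

lemma tail_in_paths_at:
  "x \<in> left_inf_paths Ed rg sr \<Longrightarrow> tail x k \<in> paths_at Ed rg sr (rg (x k))"
  by (induction k) (simp_all add: tail_0 tail_Suc paths_at_def is_path_Cons left_inf_paths_def)

lemma tail_in_paths_at_iff:
  "x \<in> left_inf_paths Ed rg sr \<Longrightarrow> tail x k \<in> paths_at Ed rg sr v \<longleftrightarrow> v = rg (x k)"
  using tail_in_paths_at by (fastforce simp: paths_at_def)

lemma left_inf_paths_if_tails:
  assumes "\<And>j. is_path Ed rg sr (tail x (n + j))"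
  shows "x \<in> left_inf_paths Ed rg sr"
proof -
  have path: "is_path Ed rg sr (tail x k)" for k
    using assms[of k] drop_tail[of k "n + k" x] is_path_append
    by (metis append_take_drop_id diff_add_inverse2 le_add2)
  have "x k \<in> Ed" for k
    using path[of k] by (cases k) (simp_all add: tail_0 tail_Suc is_path_Cons)
  moreover have "sr (x (Suc k)) = rg (x k)" for k
    using path[of "Suc k"] by (simp add: tail_Suc is_path_Cons)
  ultimately show ?thesis
    by (simp add: left_inf_paths_def)
qed

section \<open>The topology of left-infinite paths\<close>

lemma openin_discrete_product_cylinder:
  assumes S: "openin (product_topology (\<lambda>_::nat. discrete_topology A) UNIV) S" and "x \<in> S"
  shows "\<exists>k. \<forall>y\<in>UNIV \<rightarrow>\<^sub>E A. tail y k = tail x k \<longrightarrow> y \<in> S"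
proof -
  obtain U where fin: "finite {i. U i \<noteq> A}" and x: "x \<in> PiE UNIV U" and U: "PiE UNIV U \<subseteq> S"
    using S \<open>x \<in> S\<close> unfolding openin_product_topology_alt by auto
  obtain k where k: "{i. U i \<noteq> A} \<subseteq> {..k}"
    using fin finite_nat_iff_bounded_le by auto
  have "y \<in> S" if "y \<in> UNIV \<rightarrow>\<^sub>E A" "tail y k = tail x k" for y
  proof -
    have "y i \<in> U i" for i
      using that x k by (cases "i \<le> k") (auto simp: tail_eq_tail_iff)
    then show ?thesis
      using U by auto
  qed
  then show ?thesis
    by blast
qed

lemma openin_discrete_productI:
  assumes S: "S \<subseteq> (UNIV \<rightarrow>\<^sub>E A)"
    and cylinder: "\<And>x. x \<in> S \<Longrightarrow> \<exists>k. \<forall>y\<in>UNIV \<rightarrow>\<^sub>E A. tail y k = tail x k \<longrightarrow> y \<in> S"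
  shows "openin (product_topology (\<lambda>_::nat. discrete_topology A) UNIV) S"
  unfolding openin_product_topology_alt
proof
  fix x assume "x \<in> S"
  then obtain k where k: "\<forall>y\<in>UNIV \<rightarrow>\<^sub>E A. tail y k = tail x k \<longrightarrow> y \<in> S"
    and xA: "x \<in> UNIV \<rightarrow>\<^sub>E A"
    using S cylinder by blast
  define U where "U i = (if i \<le> k then {x i} else A)" for i
  have "finite {i. U i \<noteq> A}"
    by (rule finite_subset[of _ "{..k}"]) (auto simp: U_def)
  moreover have "PiE UNIV U \<subseteq> S"
  proof
    fix y assume "y \<in> PiE UNIV U"
    then have "y \<in> UNIV \<rightarrow>\<^sub>E A" "\<forall>i\<le>k. y i = x i"
      using xA by (auto simp: U_def PiE_iff split: if_splits) metis
    then show "y \<in> S"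
      using k by (simp add: tail_eq_tail_iff)
  qed
  ultimately show "\<exists>U. finite {i \<in> UNIV. U i \<noteq> topspace (discrete_topology A)} \<and>
      (\<forall>i\<in>UNIV. openin (discrete_topology A) (U i)) \<and> x \<in> PiE UNIV U \<and> PiE UNIV U \<subseteq> S"
    using xA by (intro exI[of _ U]) (auto simp: U_def)
qed

lemma left_inf_paths_subset: "left_inf_paths Ed rg sr \<subseteq> (UNIV \<rightarrow>\<^sub>E Ed)"
  by (auto simp: left_inf_paths_def PiE_iff)

lemma topspace_left_inf_topology [simp]:
  "topspace (left_inf_topology Ed rg sr) = left_inf_paths Ed rg sr"
  by (simp add: left_inf_topology_def Int_absorb1[OF left_inf_paths_subset])

lemma openin_left_inf_topology_cylinder:
  assumes "openin (left_inf_topology Ed rg sr) S" "x \<in> S"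
  shows "\<exists>k. \<forall>y\<in>left_inf_paths Ed rg sr. tail y k = tail x k \<longrightarrow> y \<in> S"
proof -
  obtain T where T: "openin (product_topology (\<lambda>_. discrete_topology Ed) UNIV) T"
    and S: "S = T \<inter> left_inf_paths Ed rg sr"
    using assms(1) unfolding left_inf_topology_def openin_subtopology by blast
  then obtain k where "\<forall>y\<in>UNIV \<rightarrow>\<^sub>E Ed. tail y k = tail x k \<longrightarrow> y \<in> T"
    using openin_discrete_product_cylinder \<open>x \<in> S\<close> by blast
  then show ?thesis
    using S left_inf_paths_subset by blast
qed

lemma openin_left_inf_topologyI:
  assumes S: "S \<subseteq> left_inf_paths Ed rg sr"
    and cylinder: "\<And>x. x \<in> S \<Longrightarrow> \<exists>k. \<forall>y\<in>left_inf_paths Ed rg sr. tail y k = tail x k \<longrightarrow> y \<in> S"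
  shows "openin (left_inf_topology Ed rg sr) S"
proof -
  define T where "T = {y \<in> UNIV \<rightarrow>\<^sub>E Ed. \<exists>x\<in>S. \<exists>k.
    (\<forall>z\<in>left_inf_paths Ed rg sr. tail z k = tail x k \<longrightarrow> z \<in> S) \<and> tail y k = tail x k}"
  have "openin (product_topology (\<lambda>_. discrete_topology Ed) UNIV) T"
  proof (rule openin_discrete_productI)
    fix y assume "y \<in> T"
    then obtain x k where x: "x \<in> S" "\<forall>z\<in>left_inf_paths Ed rg sr. tail z k = tail x k \<longrightarrow> z \<in> S"
      "tail y k = tail x k"
      by (auto simp: T_def)
    show "\<exists>k. \<forall>z\<in>UNIV \<rightarrow>\<^sub>E Ed. tail z k = tail y k \<longrightarrow> z \<in> T"
    proof (intro exI[of _ k] ballI impI)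
      fix z assume "z \<in> UNIV \<rightarrow>\<^sub>E Ed" "tail z k = tail y k"
      then show "z \<in> T"
        using x unfolding T_def by auto
    qed
  qed (auto simp: T_def)
  moreover have "S = T \<inter> left_inf_paths Ed rg sr"
  proof
    show "S \<subseteq> T \<inter> left_inf_paths Ed rg sr"
    proof
      fix x assume "x \<in> S"
      then obtain k where "\<forall>z\<in>left_inf_paths Ed rg sr. tail z k = tail x k \<longrightarrow> z \<in> S"
        using cylinder by blast
      then show "x \<in> T \<inter> left_inf_paths Ed rg sr"
        using \<open>x \<in> S\<close> S left_inf_paths_subset unfolding T_def by blast
    qed
    show "T \<inter> left_inf_paths Ed rg sr \<subseteq> S"
      unfolding T_def by blast
  qed
  ultimately show ?thesis
    unfolding left_inf_topology_def openin_subtopology by blast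
qed

lemma openin_tail_set: "openin (left_inf_topology Ed rg sr) {x \<in> left_inf_paths Ed rg sr. tail x k \<in> W}"
  by (rule openin_left_inf_topologyI) (auto intro!: exI[of _ k])

lemma closedin_tail_set: "closedin (left_inf_topology Ed rg sr) {x \<in> left_inf_paths Ed rg sr. tail x k \<in> W}"
proof -
  have "left_inf_paths Ed rg sr - {x \<in> left_inf_paths Ed rg sr. tail x k \<in> W} =
      {x \<in> left_inf_paths Ed rg sr. tail x k \<in> - W}"
    by blast
  then show ?thesis
    using openin_tail_set[of Ed rg sr k "- W"] by (simp add: closedin_def)
qed

lemma compact_space_left_inf_topology:
  assumes "finite Ed"
  shows "compact_space (left_inf_topology Ed rg sr)"
proof -
  let ?P = "product_topology (\<lambda>_::nat. discrete_topology Ed) UNIV"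
  have "openin ?P ((UNIV \<rightarrow>\<^sub>E Ed) - left_inf_paths Ed rg sr)"
  proof (rule openin_discrete_productI)
    fix x assume "x \<in> (UNIV \<rightarrow>\<^sub>E Ed) - left_inf_paths Ed rg sr"
    then obtain k where k: "sr (x (Suc k)) \<noteq> rg (x k)"
      by (auto simp: left_inf_paths_def PiE_iff)
    have "y \<notin> left_inf_paths Ed rg sr" if "tail y (Suc k) = tail x (Suc k)" for y
    proof -
      have "y (Suc k) = x (Suc k)" "y k = x k"
        using that by (simp_all add: tail_eq_tail_iff)
      then show ?thesis
        using k unfolding left_inf_paths_def by (metis (mono_tags) mem_Collect_eq)
    qed
    then show "\<exists>k. \<forall>y\<in>UNIV \<rightarrow>\<^sub>E Ed. tail y k = tail x k \<longrightarrow> y \<in> (UNIV \<rightarrow>\<^sub>E Ed) - left_inf_paths Ed rg sr"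
      by blast
  qed auto
  then have "closedin ?P (left_inf_paths Ed rg sr)"
    using left_inf_paths_subset by (simp add: closedin_def)
  moreover have "compact_space ?P"
    using assms by (simp add: compact_space_product_topology compact_space_discrete_topology)
  ultimately show ?thesis
    unfolding left_inf_topology_def by (simp add: closedin_compact_space compact_space_subtopology)
qed

lemma tail_separation:
  assumes P: "compactin (left_inf_topology Ed rg sr) P" and Q: "closedin (left_inf_topology Ed rg sr) Q"
    and "P \<inter> Q = {}"
  shows "\<exists>n. \<forall>a\<in>P. \<forall>b\<in>Q. tail a n \<noteq> tail b n"
proof -
  define Sep where "Sep n = {a \<in> left_inf_paths Ed rg sr. tail a n \<in> - (\<lambda>b. tail b n) ` Q}" for n
  have "openin (left_inf_topology Ed rg sr) (Sep n)" for n
    unfolding Sep_def by (rule openin_tail_set)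
  moreover have "P \<subseteq> \<Union> (range Sep)"
  proof
    fix a assume "a \<in> P"
    then have a: "a \<in> left_inf_paths Ed rg sr - Q"
      using assms compactin_subset_topspace by fastforce
    moreover have "openin (left_inf_topology Ed rg sr) (left_inf_paths Ed rg sr - Q)"
      using Q by (simp add: closedin_def)
    ultimately obtain k where "\<forall>y\<in>left_inf_paths Ed rg sr. tail y k = tail a k \<longrightarrow> y \<in> left_inf_paths Ed rg sr - Q"
      using openin_left_inf_topology_cylinder by blast
    then have "a \<in> Sep k"
      using a Q closedin_subset by (fastforce simp: Sep_def)
    then show "a \<in> \<Union> (range Sep)"
      by blast
  qed
  ultimately obtain V where "finite V" "V \<subseteq> range Sep" "P \<subseteq> \<Union> V"
    using P[unfolded compactin_def, THEN conjunct2, rule_format, of "range Sep"] by blast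
  then obtain K where "finite K" and cover: "P \<subseteq> \<Union> (Sep ` K)"
    using finite_subset_image[of V Sep UNIV] by blast
  obtain n where n: "\<And>k. k \<in> K \<Longrightarrow> k < n"
    using finite_nat_bounded[OF \<open>finite K\<close>] by auto
  have "tail a n \<noteq> tail b n" if "a \<in> P" "b \<in> Q" for a b
  proof
    obtain k where "k \<in> K" "a \<in> Sep k"
      using cover \<open>a \<in> P\<close> by blast
    then have "tail a k \<noteq> tail b k"
      using \<open>b \<in> Q\<close> unfolding Sep_def by blast
    moreover assume "tail a n = tail b n"
    then have "tail a k = tail b k"
      using n[OF \<open>k \<in> K\<close>] by (simp add: tail_eq_tail_iff)
    ultimately show False
      by contradiction
  qed
  then show ?thesis
    by blast
qed

section \<open>Connectedness in the quotient\<close>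

lemma connected_component_of_quotient_map_saturated_clopen:
  assumes q: "quotient_map X Y q" and U: "openin X U" "closedin X U"
    and saturated: "\<And>x y. x \<in> U \<Longrightarrow> y \<in> topspace X \<Longrightarrow> q y = q x \<Longrightarrow> y \<in> U"
    and x: "x \<in> U" and y: "y \<in> topspace X" and xy: "connected_component_of Y (q x) (q y)"
  shows "y \<in> U"
proof -
  have sat: "{z \<in> topspace X. q z \<in> q ` U} \<subseteq> U"
    using saturated by blast
  have "openin Y (q ` U)"
    using U(1) sat q[unfolded quotient_map_saturated_open, THEN conjunct2, THEN conjunct2, rule_format]
    by blast
  moreover have "closedin Y (q ` U)"
    using U(2) sat q[unfolded quotient_map_saturated_closed, THEN conjunct2, THEN conjunct2, rule_format]
    by blast
  moreover obtain C where "connectedin Y C" "q x \<in> C" "q y \<in> C"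
    using xy unfolding connected_component_of_def by blast
  ultimately have "C \<subseteq> q ` U"
    using x connectedin_clopen_cases[of Y C "q ` U"] by (auto simp: disjnt_iff)
  then obtain u where "u \<in> U" "q y = q u"
    using \<open>q y \<in> C\<close> by blast
  then show ?thesis
    using saturated y by blast
qed

lemma connectedin_image_if_tail_chained:
  assumes "finite Ed" and q: "continuous_map (left_inf_topology Ed rg sr) J q"
    and A: "closedin (left_inf_topology Ed rg sr) A"
    and chained: "\<And>n a b. a \<in> A \<Longrightarrow> b \<in> A \<Longrightarrow>
      (a, b) \<in> {(x, y). x \<in> A \<and> y \<in> A \<and> (tail x n = tail y n \<or> q x = q y)}\<^sup>*"
  shows "connectedin J (q ` A)"
proof -
  let ?X = "left_inf_topology Ed rg sr"
  have A_sub: "A \<subseteq> topspace ?X"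
    using A closedin_subset by blast
  have "False" if E: "openin J E1" "openin J E2" "q ` A \<subseteq> E1 \<union> E2" "E1 \<inter> E2 \<inter> q ` A = {}"
    "E1 \<inter> q ` A \<noteq> {}" "E2 \<inter> q ` A \<noteq> {}" for E1 E2
  proof -
    define P where "P = {x \<in> A. q x \<in> E1}"
    define Q where "Q = {x \<in> A. q x \<in> E2}"
    have "P = A - {x \<in> topspace ?X. q x \<in> E2}" "Q = A - {x \<in> topspace ?X. q x \<in> E1}"
      using E(3,4) A_sub by (auto simp: P_def Q_def)
    moreover have "closedin ?X (A - {x \<in> topspace ?X. q x \<in> E})" if "openin J E" for E
      by (rule closedin_diff[OF A openin_continuous_map_preimage[OF q that]])
    ultimately have "closedin ?X P" "closedin ?X Q"
      using E(1,2) by simp_all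
    then have "compactin ?X P"
      using compact_space_left_inf_topology[OF \<open>finite Ed\<close>] closedin_compact_space by blast
    moreover have PQ: "P \<inter> Q = {}"
      using E(4) by (auto simp: P_def Q_def)
    ultimately obtain n where sep: "\<forall>a\<in>P. \<forall>b\<in>Q. tail a n \<noteq> tail b n"
      using tail_separation \<open>closedin ?X Q\<close> by blast
    obtain a b where "a \<in> P" "b \<in> Q"
      using E(5,6) by (auto simp: P_def Q_def)
    have "(a, b) \<in> {(x, y). x \<in> A \<and> y \<in> A \<and> (tail x n = tail y n \<or> q x = q y)}\<^sup>*"
      using chained \<open>a \<in> P\<close> \<open>b \<in> Q\<close> by (simp add: P_def Q_def)
    then have "b \<in> P"
    proof (induction rule: rtrancl_induct)
      case base
      show ?case by (fact \<open>a \<in> P\<close>)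
    next
      case (step y z)
      then have "z \<in> A" "tail y n = tail z n \<or> q y = q z"
        by auto
      moreover have "z \<in> P \<or> z \<in> Q"
        using \<open>z \<in> A\<close> E(3) by (auto simp: P_def Q_def)
      ultimately show "z \<in> P"
        using sep \<open>y \<in> P\<close> by (auto simp: P_def)
    qed
    then show False
      using PQ \<open>b \<in> Q\<close> by blast
  qed
  moreover have "q ` A \<subseteq> topspace J"
    using A_sub q continuous_map_image_subset_topspace by blast
  ultimately show ?thesis
    unfolding connectedin by blast
qed

section \<open>Stabilisation and Koenig's lemma\<close>

lemma antimono_family_stabilises:
  fixes P :: "nat \<Rightarrow> 'a \<Rightarrow> bool"
  assumes "finite {a. P 0 a}" and antimono: "\<And>a L L'. P L' a \<Longrightarrow> L \<le> L' \<Longrightarrow> P L a"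
  shows "\<exists>M. \<forall>a. P M a \<longrightarrow> (\<forall>L. P L a)"
proof -
  define B where "B = {a. P 0 a \<and> \<not> (\<forall>L. P L a)}"
  have "\<forall>a\<in>B. \<exists>L. \<not> P L a"
    by (simp add: B_def)
  then obtain bound where bound: "\<And>a. a \<in> B \<Longrightarrow> \<not> P (bound a) a"
    by metis
  have "finite B"
    using assms(1) by (rule rev_finite_subset) (simp add: B_def Collect_mono)
  have "\<forall>L. P L a" if "P (Max (bound ` B)) a" for a
  proof (rule ccontr)
    assume "\<not> (\<forall>L. P L a)"
    moreover have "P 0 a"
      using antimono[OF that] by simp
    ultimately have "a \<in> B"
      by (simp add: B_def)
    then have "bound a \<le> Max (bound ` B)"
      using \<open>finite B\<close> by simp
    then have "P (bound a) a"
      by (rule antimono[OF that])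
    then show False
      using bound[OF \<open>a \<in> B\<close>] by contradiction
  qed
  then show ?thesis
    by blast
qed

lemma suffix_closed_tree_extension:
  fixes T :: "'a list set"
  assumes "finite A" and alphabet: "\<And>ps. ps \<in> T \<Longrightarrow> set ps \<subseteq> A"
    and suffix_closed: "\<And>vs ps. vs @ ps \<in> T \<Longrightarrow> ps \<in> T"
    and extensible: "\<And>L. \<exists>v. length v = L \<and> v @ p \<in> T"
  shows "\<exists>e. \<forall>L. \<exists>v. length v = L \<and> v @ e # p \<in> T"
proof (rule ccontr)
  assume "\<nexists>e. \<forall>L. \<exists>v. length v = L \<and> v @ e # p \<in> T"
  then obtain bound where bound: "\<And>e v. length v = bound e \<Longrightarrow> v @ e # p \<notin> T"
    by metis
  obtain v where v: "length v = Suc (Max (bound ` A))" "v @ p \<in> T"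
    using extensible by blast
  then obtain v1 e where v1: "v = v1 @ [e]"
    by (metis length_Suc_conv_rev)
  then have "e \<in> A"
    using alphabet[OF v(2)] by auto
  then have "bound e \<le> Max (bound ` A)"
    using \<open>finite A\<close> by simp
  then have le: "bound e \<le> length v1"
    using v(1) v1 by simp
  have "take (length v1 - bound e) v1 @ drop (length v1 - bound e) v1 @ e # p \<in> T"
    using v(2) v1 by (simp add: append_assoc[symmetric])
  then have "drop (length v1 - bound e) v1 @ e # p \<in> T"
    by (rule suffix_closed)
  then show False
    using bound le by simp
qed

lemma suffix_closed_tree_has_branch:
  fixes T :: "'a list set"
  assumes "finite A" and alphabet: "\<And>ps. ps \<in> T \<Longrightarrow> set ps \<subseteq> A"
    and suffix_closed: "\<And>vs ps. vs @ ps \<in> T \<Longrightarrow> ps \<in> T"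
    and unbounded: "\<And>L. \<exists>ps\<in>T. length ps = L"
  shows "\<exists>f. \<forall>k. tail f k \<in> T"
proof -
  define extensible where "extensible p \<longleftrightarrow> (\<forall>L. \<exists>v. length v = L \<and> v @ p \<in> T)" for p
  have "\<exists>e. extensible (e # p)" if "extensible p" for p
    using suffix_closed_tree_extension[of A T p] assms(1) alphabet suffix_closed that
    unfolding extensible_def by blast
  then obtain next_edge where next_edge: "\<And>p. extensible p \<Longrightarrow> extensible (next_edge p # p)"
    by metis
  define branch where "branch = rec_nat [] (\<lambda>_ p. next_edge p # p)"
  have branch_Suc: "branch (Suc k) = next_edge (branch k) # branch k" for k
    by (simp add: branch_def)
  have "extensible (branch k)" for k
  proof (induction k)
    case 0
    then show ?case
      using unbounded by (auto simp: branch_def extensible_def)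
  next
    case (Suc k)
    then show ?case
      using next_edge by (simp add: branch_Suc)
  qed
  then have "branch k \<in> T" for k
    unfolding extensible_def by (metis append_Nil length_0_conv)
  moreover have "tail (\<lambda>k. next_edge (branch k)) k = branch (Suc k)" for k
    by (induction k) (simp_all add: tail_0 tail_Suc branch_Suc, simp add: branch_def)
  ultimately show ?thesis
    by (intro exI[of _ "\<lambda>k. next_edge (branch k)"]) simp
qed

section \<open>Self-similar actions and orbits of finite paths\<close>

lemma ae_equiv_imp_e_equiv: "ae_equiv rg Gr dm act x y \<Longrightarrow> e_equiv rg Gr dm act x y"
  unfolding ae_equiv_def e_equiv_def by blast

lemma ae_equiv_if_eventually_in_finite:
  assumes "finite F" "F \<subseteq> Gr" and e: "e_equiv rg Gr dm act x y"
    and eventually: "\<And>k. n \<le> k \<Longrightarrow> \<exists>g\<in>F. dm g = rg (x k) \<and> act g (tail x k) = tail y k"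
  shows "ae_equiv rg Gr dm act x y"
proof -
  obtain g0 where g0: "\<And>k. g0 k \<in> Gr \<and> dm (g0 k) = rg (x k) \<and> act (g0 k) (tail x k) = tail y k"
    using e unfolding e_equiv_def by blast
  obtain g1 where g1: "\<And>k. n \<le> k \<Longrightarrow> g1 k \<in> F \<and> dm (g1 k) = rg (x k) \<and> act (g1 k) (tail x k) = tail y k"
    using eventually by metis
  define g where "g k = (if n \<le> k then g1 k else g0 k)" for k
  have "g k \<in> F \<union> g0 ` {..<n} \<and> dm (g k) = rg (x k) \<and> act (g k) (tail x k) = tail y k" for k
    using g0 g1 by (auto simp: g_def)
  moreover have "finite (F \<union> g0 ` {..<n})" "F \<union> g0 ` {..<n} \<subseteq> Gr"
    using assms(1,2) g0 by auto
  ultimately show ?thesis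
    unfolding ae_equiv_def by (intro exI[of _ "F \<union> g0 ` {..<n}"] exI[of _ g]) simp
qed

lemma contracting_uniformly_on_finite:
  assumes "contracting Ed rg sr Gr dm res" and "finite S" "S \<subseteq> Gr"
  shows "\<exists>F N. finite F \<and> F \<subseteq> Gr \<and>
    (\<forall>s\<in>S. \<forall>p\<in>paths_at Ed rg sr (dm s). N \<le> length p \<longrightarrow> res s p \<in> F)"
proof -
  obtain F where F: "finite F" "F \<subseteq> Gr"
    and contr: "\<forall>g\<in>Gr. \<exists>n. \<forall>p\<in>paths_at Ed rg sr (dm g). length p \<ge> n \<longrightarrow> res g p \<in> F"
    using assms(1) unfolding contracting_def by blast
  have "\<forall>s\<in>S. \<exists>n. \<forall>p\<in>paths_at Ed rg sr (dm s). n \<le> length p \<longrightarrow> res s p \<in> F"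
    using contr \<open>S \<subseteq> Gr\<close> by blast
  then obtain n where n: "\<And>s p. s \<in> S \<Longrightarrow> p \<in> paths_at Ed rg sr (dm s) \<Longrightarrow> n s \<le> length p \<Longrightarrow> res s p \<in> F"
    by metis
  have "n s \<le> (\<Sum>s\<in>S. n s)" if "s \<in> S" for s
    by (rule member_le_sum[OF that _ \<open>finite S\<close>]) simp
  then have "\<forall>s\<in>S. \<forall>p\<in>paths_at Ed rg sr (dm s). (\<Sum>s\<in>S. n s) \<le> length p \<longrightarrow> res s p \<in> F"
    using n by (meson le_trans)
  then show ?thesis
    using F by (intro exI[of _ F] exI[of _ "\<Sum>s\<in>S. n s"]) simp
qed

locale self_similar_groupoid_action =
  fixes V :: "'v set" and Ed :: "'e set" and rg sr :: "'e \<Rightarrow> 'v"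
    and Gr :: "'g set" and dm cd :: "'g \<Rightarrow> 'v" and mul :: "'g \<Rightarrow> 'g \<Rightarrow> 'g"
    and ginv :: "'g \<Rightarrow> 'g" and unit :: "'v \<Rightarrow> 'g"
    and act :: "'g \<Rightarrow> 'e list \<Rightarrow> 'e list" and res :: "'g \<Rightarrow> 'e list \<Rightarrow> 'g"
  assumes self_similar: "self_similar_action V Ed rg sr Gr dm cd mul ginv unit act res"
begin

abbreviation Paths :: "'v \<Rightarrow> 'e list set" where
  "Paths v \<equiv> paths_at Ed rg sr v"

lemma rg_in_V: "e \<in> Ed \<Longrightarrow> rg e \<in> V"
  using self_similar by (simp add: self_similar_action_def graph_def)

lemma
  shows unit_in: "v \<in> V \<Longrightarrow> unit v \<in> Gr" and dm_unit: "v \<in> V \<Longrightarrow> dm (unit v) = v"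
    and mul_in: "g \<in> Gr \<Longrightarrow> h \<in> Gr \<Longrightarrow> dm g = cd h \<Longrightarrow> mul g h \<in> Gr"
    and dm_mul: "g \<in> Gr \<Longrightarrow> h \<in> Gr \<Longrightarrow> dm g = cd h \<Longrightarrow> dm (mul g h) = dm h"
    and ginv_in: "g \<in> Gr \<Longrightarrow> ginv g \<in> Gr" and dm_ginv: "g \<in> Gr \<Longrightarrow> dm (ginv g) = cd g"
    and ginv_mul: "g \<in> Gr \<Longrightarrow> mul (ginv g) g = unit (dm g)"
    and dm_in_V: "g \<in> Gr \<Longrightarrow> dm g \<in> V"
  using self_similar by (simp_all add: self_similar_action_def groupoid_def)

lemma
  shows act_bij: "g \<in> Gr \<Longrightarrow> bij_betw (act g) (Paths (dm g)) (Paths (cd g))"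
    and length_act: "g \<in> Gr \<Longrightarrow> p \<in> Paths (dm g) \<Longrightarrow> length (act g p) = length p"
    and act_unit: "v \<in> V \<Longrightarrow> p \<in> Paths v \<Longrightarrow> act (unit v) p = p"
    and act_mul: "g \<in> Gr \<Longrightarrow> h \<in> Gr \<Longrightarrow> dm g = cd h \<Longrightarrow> p \<in> Paths (dm h) \<Longrightarrow>
      act (mul g h) p = act g (act h p)"
    and res_in: "g \<in> Gr \<Longrightarrow> p \<in> Paths (dm g) \<Longrightarrow> res g p \<in> Gr"
    and dm_res: "g \<in> Gr \<Longrightarrow> p \<in> Paths (dm g) \<Longrightarrow> dm (res g p) = path_source sr (dm g) p"
  using self_similar by (simp_all add: self_similar_action_def)

lemma act_append:
  assumes "g \<in> Gr" "p @ q \<in> Paths (dm g)"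
  shows "act g (p @ q) = act g p @ act (res g p) q"
  using self_similar assms paths_at_appendD(1)[OF assms(2)] by (simp add: self_similar_action_def)

lemma act_in_paths: "g \<in> Gr \<Longrightarrow> p \<in> Paths (dm g) \<Longrightarrow> act g p \<in> Paths (cd g)"
  using act_bij bij_betwE by blast

lemma act_ginv_act:
  assumes "g \<in> Gr" "p \<in> Paths (dm g)"
  shows "act (ginv g) (act g p) = p"
proof -
  have "act (ginv g) (act g p) = act (mul (ginv g) g) p"
    using assms by (simp add: act_mul ginv_in dm_ginv)
  also have "\<dots> = p"
    using assms by (simp add: ginv_mul act_unit dm_in_V)
  finally show ?thesis .
qed

lemma rg_hd_act: "g \<in> Gr \<Longrightarrow> p \<in> Paths (dm g) \<Longrightarrow> p \<noteq> [] \<Longrightarrow> rg (hd (act g p)) = cd g"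
  using act_in_paths length_act by (fastforce simp: paths_at_def)

definition orbit :: "'e list \<Rightarrow> 'e list set" where
  "orbit p = {act g p | g. g \<in> Gr \<and> p \<in> Paths (dm g)}"

lemma orbit_refl: "v \<in> V \<Longrightarrow> p \<in> Paths v \<Longrightarrow> p \<in> orbit p"
  unfolding orbit_def using unit_in dm_unit act_unit by (metis (mono_tags, lifting) mem_Collect_eq)

lemma length_orbit: "w \<in> orbit p \<Longrightarrow> length w = length p"
  by (auto simp: orbit_def length_act)

lemma act_in_orbit:
  assumes "w \<in> orbit p" "p \<noteq> []" "h \<in> Gr" "w \<in> Paths (dm h)"
  shows "act h w \<in> orbit p"
proof -
  obtain g where g: "g \<in> Gr" "p \<in> Paths (dm g)" "w = act g p"
    using assms(1) by (auto simp: orbit_def)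
  have "dm h = cd g"
    using assms(2,4) g rg_hd_act[OF g(1,2)] length_act[OF g(1,2)] by (auto simp: paths_at_def)
  then have "mul h g \<in> Gr" "p \<in> Paths (dm (mul h g))" "act (mul h g) p = act h w"
    using g assms(3) by (simp_all add: mul_in dm_mul act_mul)
  then show ?thesis
    unfolding orbit_def by (metis (mono_tags, lifting) mem_Collect_eq)
qed

lemma orbit_trans:
  assumes "w \<in> orbit p" "p \<noteq> []" "w' \<in> orbit w"
  shows "w' \<in> orbit p"
proof -
  obtain h where "h \<in> Gr" "w \<in> Paths (dm h)" "w' = act h w"
    using assms(3) by (auto simp: orbit_def)
  then show ?thesis
    using act_in_orbit[OF assms(1,2)] by blast
qed

lemma drop_in_orbit:
  assumes "w \<in> orbit p"
  shows "drop j w \<in> orbit (drop j p)"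
proof -
  obtain g where g: "g \<in> Gr" "p \<in> Paths (dm g)" "w = act g p"
    using assms by (auto simp: orbit_def)
  show ?thesis
  proof (cases "j \<le> length p")
    case True
    let ?u = "take j p"
    have p: "?u @ drop j p \<in> Paths (dm g)"
      using g(2) by simp
    have "w = act g ?u @ act (res g ?u) (drop j p)"
      using act_append[OF g(1) p] g(3) by simp
    moreover have "length (act g ?u) = j"
      using length_act[OF g(1) paths_at_appendD(1)[OF p]] True by simp
    ultimately have "drop j w = act (res g ?u) (drop j p)"
      by simp
    moreover have "res g ?u \<in> Gr" "drop j p \<in> Paths (dm (res g ?u))"
      using res_in dm_res g(1) paths_at_appendD[OF p] by simp_all
    ultimately show ?thesis
      unfolding orbit_def by (metis (mono_tags, lifting) mem_Collect_eq)
  next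
    case False
    then have "drop j w = act g (drop j p)"
      using g length_act[OF g(1,2)] length_act[OF g(1), of "[]"] by (simp add: paths_at_def)
    moreover have "drop j p \<in> Paths (dm g)"
      using False by (simp add: paths_at_def)
    ultimately show ?thesis
      unfolding orbit_def using g(1) by (metis (mono_tags, lifting) mem_Collect_eq)
  qed
qed

lemma mem_orbit_tail_iff:
  "x \<in> left_inf_paths Ed rg sr \<Longrightarrow>
    w \<in> orbit (tail x k) \<longleftrightarrow> (\<exists>g\<in>Gr. dm g = rg (x k) \<and> act g (tail x k) = w)"
  by (auto simp: orbit_def tail_in_paths_at_iff)

lemma e_equiv_iff_orbit:
  assumes "x \<in> left_inf_paths Ed rg sr"
  shows "e_equiv rg Gr dm act x y \<longleftrightarrow> (\<forall>k. tail y k \<in> orbit (tail x k))"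
  unfolding e_equiv_def mem_orbit_tail_iff[OF assms] Bex_def
  using choice_iff[of "\<lambda>k g. g \<in> Gr \<and> dm g = rg (x k) \<and> act g (tail x k) = tail y k"] by simp

lemma e_equiv_refl:
  assumes "x \<in> left_inf_paths Ed rg sr"
  shows "e_equiv rg Gr dm act x x"
  unfolding e_equiv_iff_orbit[OF assms]
proof
  fix k
  have "x k \<in> Ed"
    using assms by (simp add: left_inf_paths_def)
  then show "tail x k \<in> orbit (tail x k)"
    by (rule orbit_refl[OF rg_in_V tail_in_paths_at[OF assms]])
qed

lemma e_equiv_if_eventually:
  assumes x: "x \<in> left_inf_paths Ed rg sr" and eventually: "\<And>k. n \<le> k \<Longrightarrow> tail y k \<in> orbit (tail x k)"
  shows "e_equiv rg Gr dm act x y"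
  unfolding e_equiv_iff_orbit[OF x]
proof
  fix k
  have drop_n: "drop n (tail z (n + k)) = tail z k" for z :: "nat \<Rightarrow> 'e"
    using drop_tail[of k "n + k" z] by simp
  have "drop n (tail y (n + k)) \<in> orbit (drop n (tail x (n + k)))"
    using eventually[of "n + k"] by (simp add: drop_in_orbit)
  then show "tail y k \<in> orbit (tail x k)"
    by (simp add: drop_n)
qed

lemma ae_equiv_sym:
  assumes x: "x \<in> left_inf_paths Ed rg sr" and xy: "ae_equiv rg Gr dm act x y"
  shows "ae_equiv rg Gr dm act y x"
proof -
  obtain F g where F: "finite F" "F \<subseteq> Gr"
    and g: "\<And>k. g k \<in> F \<and> dm (g k) = rg (x k) \<and> act (g k) (tail x k) = tail y k"
    using xy unfolding ae_equiv_def by blast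
  have "ginv (g k) \<in> ginv ` F \<and> dm (ginv (g k)) = rg (y k) \<and> act (ginv (g k)) (tail y k) = tail x k" for k
  proof -
    have gk: "g k \<in> Gr" "tail x k \<in> Paths (dm (g k))"
      using g F(2) tail_in_paths_at[OF x] by auto
    then show ?thesis
      using g[of k] rg_hd_act[OF gk] act_ginv_act[OF gk] by (simp add: dm_ginv)
  qed
  moreover have "finite (ginv ` F)" "ginv ` F \<subseteq> Gr"
    using F ginv_in by auto
  ultimately show ?thesis
    unfolding ae_equiv_def by (intro exI[of _ "ginv ` F"] exI[of _ "\<lambda>k. ginv (g k)"]) simp
qed

lemma e_equiv_if_connected_component:
  assumes q: "quotient_map (left_inf_topology Ed rg sr) J q"
    and fibres: "\<And>x y. x \<in> left_inf_paths Ed rg sr \<Longrightarrow> y \<in> left_inf_paths Ed rg sr \<Longrightarrow>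
      q x = q y \<Longrightarrow> ae_equiv rg Gr dm act x y"
    and \<mu>: "\<mu> \<in> left_inf_paths Ed rg sr" and \<nu>: "\<nu> \<in> left_inf_paths Ed rg sr"
    and component: "connected_component_of J (q \<mu>) (q \<nu>)"
  shows "e_equiv rg Gr dm act \<mu> \<nu>"
  unfolding e_equiv_iff_orbit[OF \<mu>]
proof
  fix k
  let ?U = "{x \<in> left_inf_paths Ed rg sr. tail x k \<in> orbit (tail \<mu> k)}"
  have "\<nu> \<in> ?U"
  proof (rule connected_component_of_quotient_map_saturated_clopen[OF q])
    show "openin (left_inf_topology Ed rg sr) ?U" "closedin (left_inf_topology Ed rg sr) ?U"
      by (rule openin_tail_set, rule closedin_tail_set)
    show "\<mu> \<in> ?U"
      using e_equiv_refl[OF \<mu>] \<mu> by (simp add: e_equiv_iff_orbit)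
    fix x y
    assume "x \<in> ?U" "y \<in> topspace (left_inf_topology Ed rg sr)" "q y = q x"
    then have x: "x \<in> left_inf_paths Ed rg sr" and y: "y \<in> left_inf_paths Ed rg sr"
      by simp_all
    then have "ae_equiv rg Gr dm act x y"
      using fibres \<open>q y = q x\<close> by simp
    then have "tail y k \<in> orbit (tail x k)"
      using ae_equiv_imp_e_equiv e_equiv_iff_orbit[OF x] by blast
    then show "y \<in> ?U"
      using y \<open>x \<in> ?U\<close> orbit_trans by auto
  qed (use \<nu> component in simp_all)
  then show "tail \<nu> k \<in> orbit (tail \<mu> k)"
    by simp
qed

end

section \<open>Realising generator moves by asymptotically equivalent paths\<close>

locale generated_contracting_action =
  self_similar_groupoid_action V Ed rg sr Gr dm cd mul ginv unit act res
  for V :: "'v set" and Ed :: "'e set" and rg sr and Gr :: "'g set" and dm cd mul ginv unit act res +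
  fixes S F :: "'g set" and N :: nat
  assumes finite_edges: "finite Ed"
    and generated: "Gr = gen_groupoid V dm cd mul ginv unit S"
    and finite_F: "finite F" and F_subset: "F \<subseteq> Gr"
    and res_generator_in_F: "\<And>s p. s \<in> S \<Longrightarrow> p \<in> Paths (dm s) \<Longrightarrow> N \<le> length p \<Longrightarrow> res s p \<in> F"
begin

lemma generators_in: "s \<in> S \<Longrightarrow> s \<in> Gr"
  using generated gen_groupoid.gen_base by metis

definition generator_step :: "('e list \<times> 'e list) set" where
  "generator_step = {(w, act s w) | s w. s \<in> S \<and> w \<in> Paths (dm s)}"

lemma act_in_generator_steps:
  assumes "g \<in> Gr" "w \<in> Paths (dm g)"
  shows "(w, act g w) \<in> (generator_step \<union> generator_step\<inverse>)\<^sup>*"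
proof -
  have sym: "sym ((generator_step \<union> generator_step\<inverse>)\<^sup>*)"
    by (simp add: sym_Un_converse sym_rtrancl)
  have "g \<in> gen_groupoid V dm cd mul ginv unit S"
    using assms(1) generated by simp
  then show ?thesis
    using assms(2)
  proof (induction arbitrary: w rule: gen_groupoid.induct)
    case (gen_unit v)
    then show ?case
      by (simp add: act_unit dm_unit)
  next
    case (gen_base s)
    then have "(w, act s w) \<in> generator_step"
      unfolding generator_step_def by blast
    then show ?case
      by (intro r_into_rtrancl UnI1)
  next
    case (gen_inv g)
    have g: "g \<in> Gr"
      using gen_inv.hyps generated by simp
    then have "w \<in> Paths (cd g)"
      using gen_inv.prems by (simp add: dm_ginv)
    then obtain w0 where w0: "w0 \<in> Paths (dm g)" "w = act g w0"
      using act_bij[OF g] by (metis bij_betw_imp_surj_on imageE)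
    then have "act (ginv g) w = w0"
      using act_ginv_act[OF g] by simp
    then show ?case
      using gen_inv.IH[OF w0(1)] w0(2) sym by (metis symD)
  next
    case (gen_mul g h)
    have g: "g \<in> Gr" and h: "h \<in> Gr"
      using gen_mul.hyps generated by simp_all
    have w: "w \<in> Paths (dm h)"
      using gen_mul.prems dm_mul[OF g h gen_mul.hyps(3)] by simp
    then have "act h w \<in> Paths (dm g)"
      using act_in_paths[OF h] gen_mul.hyps(3) by simp
    then show ?case
      using gen_mul.IH(1) gen_mul.IH(2)[OF w] act_mul[OF g h gen_mul.hyps(3) w]
      by (metis rtrancl_trans)
  qed
qed

lemma generator_steps_preserve_orbit:
  assumes "(w, w') \<in> (generator_step \<union> generator_step\<inverse>)\<^sup>*" "w \<in> orbit p" "p \<noteq> []"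
  shows "w' \<in> orbit p"
  using assms(1)
proof (induction rule: rtrancl_induct)
  case base
  show ?case
    by (fact assms(2))
next
  case (step w1 w2)
  then obtain s where s: "s \<in> Gr"
    and "w1 \<in> Paths (dm s) \<and> w2 = act s w1 \<or> w2 \<in> Paths (dm s) \<and> w1 = act s w2"
    unfolding generator_step_def using generators_in by blast
  then consider "w1 \<in> Paths (dm s)" "w2 = act s w1" | "w1 \<in> Paths (dm (ginv s))" "w2 = act (ginv s) w1"
    using act_in_paths act_ginv_act dm_ginv by metis
  then show ?case
    using act_in_orbit[OF step.IH \<open>p \<noteq> []\<close>] s ginv_in by cases auto
qed

definition tail_orbits :: "(nat \<Rightarrow> 'e) \<Rightarrow> 'e list set" where
  "tail_orbits x = (\<Union>k. orbit (tail x k))"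

lemma tail_in_tail_orbits_iff: "tail y k \<in> tail_orbits x \<longleftrightarrow> tail y k \<in> orbit (tail x k)"
  using length_orbit by (fastforce simp: tail_orbits_def)

lemma drop_in_tail_orbits:
  assumes "w \<in> tail_orbits x" "j < length w"
  shows "drop j w \<in> tail_orbits x"
proof -
  obtain m where m: "w \<in> orbit (tail x m)"
    using assms(1) by (auto simp: tail_orbits_def)
  then have "j \<le> m"
    using assms(2) length_orbit by fastforce
  then have "drop j (tail x m) = tail x (m - j)"
    using drop_tail[of "m - j" m x] by simp
  then show ?thesis
    using drop_in_orbit[OF m, of j] by (auto simp: tail_orbits_def)
qed

text \<open>The middle parts of the two words are zipped into \<open>ps\<close> so that Koenig's lemma can run
  over the alphabet \<open>Ed \<times> Ed\<close>. Since \<open>u\<close> has length at least \<open>N\<close>, the restriction of \<open>s\<close>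
  past \<open>u\<close> lies in \<open>F\<close>.\<close>

definition linked :: "(nat \<Rightarrow> 'e) \<Rightarrow> 'e list \<Rightarrow> 'e list \<Rightarrow> ('e \<times> 'e) list \<Rightarrow> bool" where
  "linked \<mu> r r' ps \<longleftrightarrow> (\<exists>s\<in>S. \<exists>u u'. N \<le> length u \<and> length u' = length u \<and>
     u @ map fst ps @ r \<in> Paths (dm s) \<inter> tail_orbits \<mu> \<and>
     act s (u @ map fst ps @ r) = u' @ map snd ps @ r')"

lemma linked_suffix:
  assumes "linked \<mu> r r' (vs @ ps)"
  shows "linked \<mu> r r' ps"
proof -
  obtain s u u' where s: "s \<in> S" and "N \<le> length u" "length u' = length u"
    "u @ map fst (vs @ ps) @ r \<in> Paths (dm s) \<inter> tail_orbits \<mu>"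
    "act s (u @ map fst (vs @ ps) @ r) = u' @ map snd (vs @ ps) @ r'"
    using assms unfolding linked_def by blast
  then show ?thesis
    unfolding linked_def
    by (intro bexI[OF _ s] exI[of _ "u @ map fst vs"] exI[of _ "u' @ map snd vs"]) simp
qed

lemma linked_restriction:
  assumes "linked \<mu> r r' ps" "r \<noteq> []"
  shows "\<exists>g\<in>F. map fst ps @ r \<in> Paths (dm g) \<inter> tail_orbits \<mu> \<and> act g (map fst ps @ r) = map snd ps @ r'"
proof -
  obtain s u u' where s: "s \<in> S" and u: "N \<le> length u" "length u' = length u"
    and w: "u @ map fst ps @ r \<in> Paths (dm s) \<inter> tail_orbits \<mu>"
    and act_w: "act s (u @ map fst ps @ r) = u' @ map snd ps @ r'"
    using assms(1) unfolding linked_def by blast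
  have sG: "s \<in> Gr"
    using s generators_in by blast
  have w_path: "u @ map fst ps @ r \<in> Paths (dm s)"
    using w by simp
  have u_path: "u \<in> Paths (dm s)"
    by (rule paths_at_appendD(1)[OF w_path])
  have "map fst ps @ r \<in> Paths (path_source sr (dm s) u)"
    by (rule paths_at_appendD(2)[OF w_path])
  then have rest: "map fst ps @ r \<in> Paths (dm (res s u))"
    using dm_res[OF sG u_path] by simp
  have "res s u \<in> F"
    using res_generator_in_F[OF s u_path u(1)] .
  moreover have "map fst ps @ r \<in> tail_orbits \<mu>"
    using drop_in_tail_orbits[of "u @ map fst ps @ r" \<mu> "length u"] w assms(2) by simp
  moreover have "act (res s u) (map fst ps @ r) = map snd ps @ r'"
    using act_append[OF sG, of u "map fst ps @ r"] w act_w length_act[OF sG u_path] u(2) by simp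
  ultimately show ?thesis
    using rest by blast
qed

lemma linked_edges:
  assumes "linked \<mu> r r' ps" "r \<noteq> []"
  shows "set ps \<subseteq> Ed \<times> Ed" "set r \<subseteq> Ed" "set r' \<subseteq> Ed" "length r' = length r"
proof -
  obtain g where g: "g \<in> F" "map fst ps @ r \<in> Paths (dm g)" "act g (map fst ps @ r) = map snd ps @ r'"
    using linked_restriction[OF assms] by blast
  then have "g \<in> Gr"
    using F_subset by blast
  then have "map snd ps @ r' \<in> Paths (cd g)" "length (map snd ps @ r') = length (map fst ps @ r)"
    using act_in_paths length_act g by metis+
  then have "fst ` set ps \<subseteq> Ed" "snd ` set ps \<subseteq> Ed" "set r \<subseteq> Ed" "set r' \<subseteq> Ed"
    using g(2) by (auto simp: paths_at_def is_path_def)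
  then show "set ps \<subseteq> Ed \<times> Ed" "set r \<subseteq> Ed" "set r' \<subseteq> Ed"
    by (auto simp: mem_Times_iff)
  show "length r' = length r"
    using \<open>length (map snd ps @ r') = length (map fst ps @ r)\<close> by simp
qed

lemma linked_generator_step:
  assumes s: "s \<in> S" and w: "w \<in> Paths (dm s)" "w \<in> tail_orbits \<mu>" and len: "N + M \<le> length w"
  shows "\<exists>ps. length ps = M \<and> linked \<mu> (drop (N + M) w) (drop (N + M) (act s w)) ps"
proof -
  let ?w' = "act s w"
  have len': "length ?w' = length w"
    using length_act[OF generators_in[OF s] w(1)] .
  have split: "take N v @ take M (drop N v) @ drop (N + M) v = v" for v :: "'e list"
    by (metis append_take_drop_id drop_drop add.commute)
  define ps where "ps = zip (take M (drop N w)) (take M (drop N ?w'))"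
  have ps: "length ps = M" "map fst ps = take M (drop N w)" "map snd ps = take M (drop N ?w')"
    using len len' by (simp_all add: ps_def)
  have "linked \<mu> (drop (N + M) w) (drop (N + M) ?w') ps"
    unfolding linked_def ps(2,3)
    using s w len len' split[of w] split[of ?w']
    by (intro bexI[OF _ s] exI[of _ "take N w"] exI[of _ "take N ?w'"]) simp
  then show ?thesis
    using ps(1) by blast
qed

definition deeply_linked :: "(nat \<Rightarrow> 'e) \<Rightarrow> 'e list \<Rightarrow> 'e list \<Rightarrow> bool" where
  "deeply_linked \<mu> r r' \<longleftrightarrow> (\<forall>L. \<exists>ps. length ps = L \<and> linked \<mu> r r' ps)"

lemma linked_depth_stabilises:
  "\<exists>M. \<forall>r r'. length r = Suc n \<longrightarrow> (\<exists>ps. length ps = M \<and> linked \<mu> r r' ps) \<longrightarrow> deeply_linked \<mu> r r'"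
proof -
  define P where "P L rr \<longleftrightarrow> length (fst rr) = Suc n \<and> (\<exists>ps. length ps = L \<and> linked \<mu> (fst rr) (snd rr) ps)"
    for L rr
  define W where "W = {r. set r \<subseteq> Ed \<and> length r = Suc n}"
  have "rr \<in> W \<times> W" if P0: "P 0 rr" for rr
  proof -
    obtain ps where len: "length (fst rr) = Suc n" and ps: "linked \<mu> (fst rr) (snd rr) ps"
      using P0 by (auto simp: P_def)
    then have "fst rr \<noteq> []"
      by auto
    then show ?thesis
      using len linked_edges[OF ps] by (auto simp: W_def mem_Times_iff)
  qed
  then have "{rr. P 0 rr} \<subseteq> W \<times> W"
    by blast
  moreover have "finite (W \<times> W)"
    using finite_lists_length_eq[OF finite_edges] by (simp add: W_def)
  ultimately have "finite {rr. P 0 rr}"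
    by (rule finite_subset)
  moreover have "P L rr" if "P L' rr" "L \<le> L'" for L L' rr
  proof -
    obtain ps where ps: "length ps = L'" "linked \<mu> (fst rr) (snd rr) ps" "length (fst rr) = Suc n"
      using \<open>P L' rr\<close> by (auto simp: P_def)
    then have "linked \<mu> (fst rr) (snd rr) (drop (L' - L) ps)"
      using linked_suffix[of \<mu> "fst rr" "snd rr" "take (L' - L) ps"] by simp
    moreover have "length (drop (L' - L) ps) = L"
      using ps(1) \<open>L \<le> L'\<close> by simp
    ultimately show ?thesis
      using ps(3) unfolding P_def by blast
  qed
  ultimately obtain M where "\<forall>rr. P M rr \<longrightarrow> (\<forall>L. P L rr)"
    using antimono_family_stabilises[of P] by blast
  then show ?thesis
    by (intro exI[of _ M]) (simp add: P_def deeply_linked_def)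
qed

definition e_class :: "(nat \<Rightarrow> 'e) \<Rightarrow> (nat \<Rightarrow> 'e) set" where
  "e_class \<mu> = {x \<in> left_inf_paths Ed rg sr. e_equiv rg Gr dm act \<mu> x}"

lemma deeply_linked_branch:
  assumes "deeply_linked \<mu> r r'" "r \<noteq> []"
  shows "\<exists>f. \<forall>k. linked \<mu> r r' (tail f k)"
proof -
  have "\<exists>f. \<forall>k. tail f k \<in> {ps. linked \<mu> r r' ps}"
  proof (rule suffix_closed_tree_has_branch)
    show "finite (Ed \<times> Ed)"
      using finite_edges by simp
    show "set ps \<subseteq> Ed \<times> Ed" if "ps \<in> {ps. linked \<mu> r r' ps}" for ps
      using linked_edges(1) that \<open>r \<noteq> []\<close> by simp
    show "ps \<in> {ps. linked \<mu> r r' ps}" if "vs @ ps \<in> {ps. linked \<mu> r r' ps}" for vs ps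
      using linked_suffix that by simp
    show "\<exists>ps\<in>{ps. linked \<mu> r r' ps}. length ps = L" for L
      using assms(1) unfolding deeply_linked_def by auto
  qed
  then show ?thesis
    by simp
qed

lemma e_class_pair_if_eventually_restricted:
  assumes \<mu>: "\<mu> \<in> left_inf_paths Ed rg sr"
    and restricted: "\<And>k. n \<le> k \<Longrightarrow>
      \<exists>g\<in>F. tail x k \<in> Paths (dm g) \<inter> tail_orbits \<mu> \<and> act g (tail x k) = tail y k"
  shows "x \<in> e_class \<mu>" "y \<in> e_class \<mu>" "ae_equiv rg Gr dm act x y"
proof -
  have "is_path Ed rg sr (tail x (n + j)) \<and> is_path Ed rg sr (tail y (n + j))" for j
  proof -
    obtain g where g: "g \<in> F" "tail x (n + j) \<in> Paths (dm g)" "act g (tail x (n + j)) = tail y (n + j)"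
      using restricted[of "n + j"] by auto
    then have "tail y (n + j) \<in> Paths (cd g)"
      using act_in_paths F_subset by (metis subsetD)
    then show ?thesis
      using g(2) by (simp add: paths_at_def)
  qed
  then have x: "x \<in> left_inf_paths Ed rg sr" and y: "y \<in> left_inf_paths Ed rg sr"
    using left_inf_paths_if_tails[of Ed rg sr _ n] by blast+
  have \<mu>x: "tail x k \<in> orbit (tail \<mu> k)" for k
  proof -
    have "drop n (tail x (n + k)) \<in> tail_orbits \<mu>"
      using restricted[of "n + k"] drop_in_tail_orbits[of "tail x (n + k)" \<mu> n] by auto
    then show ?thesis
      using drop_tail[of k "n + k" x] tail_in_tail_orbits_iff by simp
  qed
  have late: "\<exists>g\<in>F. dm g = rg (x k) \<and> act g (tail x k) = tail y k" if "n \<le> k" for k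
    using restricted[OF that] tail_in_paths_at_iff[OF x] by (simp; blast)
  then have "e_equiv rg Gr dm act x y"
    using e_equiv_if_eventually[OF x] mem_orbit_tail_iff[OF x] F_subset by blast
  then show "ae_equiv rg Gr dm act x y"
    using ae_equiv_if_eventually_in_finite[OF finite_F F_subset _ late] by blast
  have "tail y k \<in> orbit (tail x k)" for k
    using \<open>e_equiv rg Gr dm act x y\<close> e_equiv_iff_orbit[OF x] by blast
  then have "tail y k \<in> orbit (tail \<mu> k)" for k
    by (rule orbit_trans[OF \<mu>x tail_ne_Nil])
  then show "x \<in> e_class \<mu>" "y \<in> e_class \<mu>"
    using x y \<mu>x by (simp_all add: e_class_def e_equiv_iff_orbit[OF \<mu>])
qed

lemma deeply_linked_bridge:
  assumes \<mu>: "\<mu> \<in> left_inf_paths Ed rg sr" and r: "length r = Suc n" and deep: "deeply_linked \<mu> r r'"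
  shows "\<exists>x\<in>e_class \<mu>. \<exists>y\<in>e_class \<mu>. ae_equiv rg Gr dm act x y \<and> tail x n = r \<and> tail y n = r'"
proof -
  have "r \<noteq> []"
    using r by auto
  then obtain f where f: "\<And>k. linked \<mu> r r' (tail f k)"
    using deeply_linked_branch[OF deep] by blast
  have r': "length r' = Suc n"
    using r linked_edges(4)[OF f[of 0] \<open>r \<noteq> []\<close>] by simp
  define x where "x k = (if k \<le> n then r ! (n - k) else fst (f (k - Suc n)))" for k
  define y where "y k = (if k \<le> n then r' ! (n - k) else snd (f (k - Suc n)))" for k
  have tx: "tail x n = r" "tail x (Suc n + j) = map fst (tail f j) @ r" for j
    using tail_prepend[OF r, of "\<lambda>j. fst (f j)"] by (simp_all add: x_def[abs_def] tail_comp)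
  have ty: "tail y n = r'" "tail y (Suc n + j) = map snd (tail f j) @ r'" for j
    using tail_prepend[OF r', of "\<lambda>j. snd (f j)"] by (simp_all add: y_def[abs_def] tail_comp)
  have "\<exists>g\<in>F. tail x k \<in> Paths (dm g) \<inter> tail_orbits \<mu> \<and> act g (tail x k) = tail y k"
    if "Suc n \<le> k" for k
  proof -
    obtain j where k: "k = Suc n + j"
      using \<open>Suc n \<le> k\<close> le_Suc_ex by blast
    show ?thesis
      unfolding k tx(2) ty(2) by (rule linked_restriction[OF f[of j] \<open>r \<noteq> []\<close>])
  qed
  then show ?thesis
    using e_class_pair_if_eventually_restricted[OF \<mu>] tx(1) ty(1) by blast
qed

lemma generator_move_bridge:
  assumes \<mu>: "\<mu> \<in> left_inf_paths Ed rg sr"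
  shows "\<exists>M. \<forall>w w'. (w, w') \<in> generator_step \<union> generator_step\<inverse> \<longrightarrow> w \<in> orbit (tail \<mu> (n + (N + M))) \<longrightarrow>
    (\<exists>x\<in>e_class \<mu>. \<exists>y\<in>e_class \<mu>. ae_equiv rg Gr dm act x y \<and>
       tail x n = drop (N + M) w \<and> tail y n = drop (N + M) w')"
proof -
  obtain M where M: "\<And>r r'. length r = Suc n \<Longrightarrow> \<exists>ps. length ps = M \<and> linked \<mu> r r' ps \<Longrightarrow>
      deeply_linked \<mu> r r'"
    using linked_depth_stabilises by blast
  have forward: "\<exists>x\<in>e_class \<mu>. \<exists>y\<in>e_class \<mu>. ae_equiv rg Gr dm act x y \<and>
      tail x n = drop (N + M) w \<and> tail y n = drop (N + M) (act s w)"
    if s: "s \<in> S" and w: "w \<in> Paths (dm s)" "w \<in> orbit (tail \<mu> (n + (N + M)))" for s w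
  proof -
    have len: "length (drop (N + M) w) = Suc n"
      using length_orbit[OF w(2)] by simp
    have "w \<in> tail_orbits \<mu>"
      using w(2) by (auto simp: tail_orbits_def)
    then have "\<exists>ps. length ps = M \<and> linked \<mu> (drop (N + M) w) (drop (N + M) (act s w)) ps"
      using linked_generator_step[OF s w(1), of \<mu> M] length_orbit[OF w(2)] by simp
    then show ?thesis
      using deeply_linked_bridge[OF \<mu> len] M[OF len] by blast
  qed
  show ?thesis
  proof (intro exI[of _ M] allI impI)
    fix w w'
    assume step: "(w, w') \<in> generator_step \<union> generator_step\<inverse>" and w: "w \<in> orbit (tail \<mu> (n + (N + M)))"
    then consider s where "s \<in> S" "w \<in> Paths (dm s)" "w' = act s w"
      | s where "s \<in> S" "w' \<in> Paths (dm s)" "w = act s w'"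
      unfolding generator_step_def by blast
    then show "\<exists>x\<in>e_class \<mu>. \<exists>y\<in>e_class \<mu>. ae_equiv rg Gr dm act x y \<and>
        tail x n = drop (N + M) w \<and> tail y n = drop (N + M) w'"
    proof cases
      case 1
      then show ?thesis
        using forward w by blast
    next
      case 2
      have "w' \<in> orbit (tail \<mu> (n + (N + M)))"
        using generator_steps_preserve_orbit[OF r_into_rtrancl[OF step] w] by simp
      then show ?thesis
        using forward[OF 2(1,2)] 2(3) ae_equiv_sym unfolding e_class_def by blast
    qed
  qed
qed

lemma e_class_tails_joined_by_generator_moves:
  assumes \<mu>: "\<mu> \<in> left_inf_paths Ed rg sr" and "a \<in> e_class \<mu>" "b \<in> e_class \<mu>"
  shows "(tail a m, tail b m) \<in> (generator_step \<union> generator_step\<inverse>)\<^sup>*"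
proof -
  have from_\<mu>: "(tail \<mu> m, tail z m) \<in> (generator_step \<union> generator_step\<inverse>)\<^sup>*" if z: "z \<in> e_class \<mu>" for z
  proof -
    have "tail z m \<in> orbit (tail \<mu> m)"
      using z e_equiv_iff_orbit[OF \<mu>] by (simp add: e_class_def)
    then obtain g where "g \<in> Gr" "tail \<mu> m \<in> Paths (dm g)" "tail z m = act g (tail \<mu> m)"
      by (auto simp: orbit_def)
    then show ?thesis
      using act_in_generator_steps by simp
  qed
  have "sym ((generator_step \<union> generator_step\<inverse>)\<^sup>*)"
    by (simp add: sym_Un_converse sym_rtrancl)
  then have "(tail a m, tail \<mu> m) \<in> (generator_step \<union> generator_step\<inverse>)\<^sup>*"
    using from_\<mu>[OF \<open>a \<in> e_class \<mu>\<close>] by (rule symD)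
  then show ?thesis
    using from_\<mu>[OF \<open>b \<in> e_class \<mu>\<close>] by (rule rtrancl_trans)
qed

lemma e_class_tail_chained:
  assumes \<mu>: "\<mu> \<in> left_inf_paths Ed rg sr" and a: "a \<in> e_class \<mu>" and b: "b \<in> e_class \<mu>"
  shows "(a, b) \<in> {(x, y). x \<in> e_class \<mu> \<and> y \<in> e_class \<mu> \<and>
      (tail x n = tail y n \<or> ae_equiv rg Gr dm act x y)}\<^sup>*"
    (is "_ \<in> ?R\<^sup>*")
proof -
  obtain M where bridge: "\<And>w w'. (w, w') \<in> generator_step \<union> generator_step\<inverse> \<Longrightarrow>
      w \<in> orbit (tail \<mu> (n + (N + M))) \<Longrightarrow> \<exists>x\<in>e_class \<mu>. \<exists>y\<in>e_class \<mu>.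
        ae_equiv rg Gr dm act x y \<and> tail x n = drop (N + M) w \<and> tail y n = drop (N + M) w'"
    using generator_move_bridge[OF \<mu>] by blast
  define m where "m = n + (N + M)"
  have drop_m: "drop (N + M) (tail z m) = tail z n" for z :: "nat \<Rightarrow> 'e"
    using drop_tail[of n m z] by (simp add: m_def)
  have a_m: "tail a m \<in> orbit (tail \<mu> m)"
    using a e_equiv_iff_orbit[OF \<mu>] by (simp add: e_class_def)
  txt \<open>Follow the generator moves joining the level-\<open>m\<close> tails of \<open>a\<close> and \<open>b\<close>, bridging
    each move by an asymptotically equivalent pair in the class.\<close>
  have "(tail a m, tail b m) \<in> (generator_step \<union> generator_step\<inverse>)\<^sup>*"
    by (rule e_class_tails_joined_by_generator_moves[OF \<mu> a b])
  then have "\<exists>y\<in>e_class \<mu>. tail y n = drop (N + M) (tail b m) \<and> (a, y) \<in> ?R\<^sup>*"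
  proof (induction rule: rtrancl_induct)
    case base
    show ?case
      using a drop_m[of a] by (intro bexI[OF _ a]) simp
  next
    case (step w1 w2)
    then obtain y where y: "y \<in> e_class \<mu>" "tail y n = drop (N + M) w1" "(a, y) \<in> ?R\<^sup>*"
      by blast
    have "w1 \<in> orbit (tail \<mu> (n + (N + M)))"
      using generator_steps_preserve_orbit[OF step.hyps(1) a_m] by (simp add: m_def)
    then obtain x1 y1 where xy1: "x1 \<in> e_class \<mu>" "y1 \<in> e_class \<mu>" "ae_equiv rg Gr dm act x1 y1"
      "tail x1 n = drop (N + M) w1" "tail y1 n = drop (N + M) w2"
      using bridge[OF step.hyps(2)] by blast
    have "(y, x1) \<in> ?R" "(x1, y1) \<in> ?R"
      using y(1,2) xy1(1-4) by simp_all
    then have "(a, y1) \<in> ?R\<^sup>*"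
      using y(3) by (meson rtrancl_into_rtrancl)
    then show ?case
      using xy1(2,5) by (intro bexI[OF _ xy1(2)]) simp
  qed
  then obtain y where "y \<in> e_class \<mu>" "tail y n = tail b n" "(a, y) \<in> ?R\<^sup>*"
    using drop_m[of b] by auto
  moreover have "(y, b) \<in> ?R"
    using calculation(1,2) b by simp
  ultimately show ?thesis
    by (meson rtrancl_into_rtrancl)
qed

lemma closedin_e_class:
  assumes "\<mu> \<in> left_inf_paths Ed rg sr"
  shows "closedin (left_inf_topology Ed rg sr) (e_class \<mu>)"
proof -
  have "e_class \<mu> = (\<Inter>k. {x \<in> left_inf_paths Ed rg sr. tail x k \<in> orbit (tail \<mu> k)})"
    by (auto simp: e_class_def e_equiv_iff_orbit[OF assms])
  then show ?thesis
    by (auto intro!: closedin_Inter closedin_tail_set)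
qed

lemma connected_component_if_e_equiv:
  assumes q: "continuous_map (left_inf_topology Ed rg sr) J q"
    and fibres: "\<And>x y. x \<in> left_inf_paths Ed rg sr \<Longrightarrow> y \<in> left_inf_paths Ed rg sr \<Longrightarrow>
      ae_equiv rg Gr dm act x y \<Longrightarrow> q x = q y"
    and \<mu>: "\<mu> \<in> left_inf_paths Ed rg sr" and \<nu>: "\<nu> \<in> left_inf_paths Ed rg sr"
    and "e_equiv rg Gr dm act \<mu> \<nu>"
  shows "connected_component_of J (q \<mu>) (q \<nu>)"
proof -
  have "connectedin J (q ` e_class \<mu>)"
  proof (rule connectedin_image_if_tail_chained[OF finite_edges q closedin_e_class[OF \<mu>]])
    fix n a b
    assume "a \<in> e_class \<mu>" "b \<in> e_class \<mu>"
    then have "(a, b) \<in> {(x, y). x \<in> e_class \<mu> \<and> y \<in> e_class \<mu> \<and>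
        (tail x n = tail y n \<or> ae_equiv rg Gr dm act x y)}\<^sup>*"
      by (rule e_class_tail_chained[OF \<mu>])
    moreover have "{(x, y). x \<in> e_class \<mu> \<and> y \<in> e_class \<mu> \<and> (tail x n = tail y n \<or> ae_equiv rg Gr dm act x y)}
        \<subseteq> {(x, y). x \<in> e_class \<mu> \<and> y \<in> e_class \<mu> \<and> (tail x n = tail y n \<or> q x = q y)}"
      using fibres unfolding e_class_def by blast
    ultimately show "(a, b) \<in> {(x, y). x \<in> e_class \<mu> \<and> y \<in> e_class \<mu> \<and> (tail x n = tail y n \<or> q x = q y)}\<^sup>*"
      using rtrancl_mono by blast
  qed
  moreover have "\<mu> \<in> e_class \<mu>" "\<nu> \<in> e_class \<mu>"
    using \<mu> \<nu> e_equiv_refl \<open>e_equiv rg Gr dm act \<mu> \<nu>\<close> by (simp_all add: e_class_def)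
  ultimately show ?thesis
    unfolding connected_component_of_def by blast
qed

end

theorem proposition6p1:
  fixes V :: "'v set" and Ed :: "'e set" and rg sr :: "'e \<Rightarrow> 'v"
    and Gr :: "'g set" and dm cd :: "'g \<Rightarrow> 'v" and mul :: "'g \<Rightarrow> 'g \<Rightarrow> 'g"
    and ginv :: "'g \<Rightarrow> 'g" and unit :: "'v \<Rightarrow> 'g"
    and act :: "'g \<Rightarrow> 'e list \<Rightarrow> 'e list" and res :: "'g \<Rightarrow> 'e list \<Rightarrow> 'g"
    and J :: "'j topology" and q :: "(nat \<Rightarrow> 'e) \<Rightarrow> 'j"
  assumes finV: "finite V" and finE: "finite Ed"
    and ssa: "self_similar_action V Ed rg sr Gr dm cd mul ginv unit act res"
    and fg: "finitely_generated V Gr dm cd mul ginv unit"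
    and contr: "contracting Ed rg sr Gr dm res"
    and quot: "quotient_map (left_inf_topology Ed rg sr) J q"
    and fibres: "\<And>x y. x \<in> left_inf_paths Ed rg sr \<Longrightarrow> y \<in> left_inf_paths Ed rg sr \<Longrightarrow>
                   q x = q y \<longleftrightarrow> ae_equiv rg Gr dm act x y"
    and mu: "\<mu> \<in> left_inf_paths Ed rg sr" and nu: "\<nu> \<in> left_inf_paths Ed rg sr"
  shows "connected_component_of J (q \<mu>) (q \<nu>) \<longleftrightarrow> e_equiv rg Gr dm act \<mu> \<nu>"
proof -
  obtain S where S: "finite S" "S \<subseteq> Gr" "Gr = gen_groupoid V dm cd mul ginv unit S"
    using fg unfolding finitely_generated_def by blast
  obtain F N where F: "finite F" "F \<subseteq> Gr"
    and N: "\<forall>s\<in>S. \<forall>p\<in>paths_at Ed rg sr (dm s). N \<le> length p \<longrightarrow> res s p \<in> F"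
    using contracting_uniformly_on_finite[OF contr S(1,2)] by blast
  interpret generated_contracting_action V Ed rg sr Gr dm cd mul ginv unit act res S F N
    by unfold_locales (use ssa finE S(3) F N in auto)
  have to_ae: "\<And>x y. x \<in> left_inf_paths Ed rg sr \<Longrightarrow> y \<in> left_inf_paths Ed rg sr \<Longrightarrow>
      q x = q y \<Longrightarrow> ae_equiv rg Gr dm act x y"
    and from_ae: "\<And>x y. x \<in> left_inf_paths Ed rg sr \<Longrightarrow> y \<in> left_inf_paths Ed rg sr \<Longrightarrow>
      ae_equiv rg Gr dm act x y \<Longrightarrow> q x = q y"
    using fibres by simp_all
  show ?thesis
    using e_equiv_if_connected_component[OF quot to_ae mu nu]
      connected_component_if_e_equiv[OF quotient_imp_continuous_map[OF quot] from_ae mu nu]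
    by blast
qed

end
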